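(* Suppose the conditional gradient algorithm chooses $\theta_k$ by the exact line search $\theta_k\in\arg\min_{\theta\in[0,1]}\{(1-\theta)\mathrm{gap}(x_k,g_k)+\mathcal D(x_k,s_k,\theta)\}$, and $q>1$, $r\in[0,1]$ are such that $(\mathcal D,\mathrm{gap},\mathrm{subopt})$ satisfies the $(q,r)$ weak growth property with some finite $M>0$. Then for $k=0,1,\dots$ \[ \mathrm{subopt}_{k+1}\le\mathrm{subopt}_k\Big(1-\tfrac{q-1}{q}\min\Big\{1,\Big(\tfrac{\mathrm{subopt}_k^{1-r}}{M}\Big)^{\frac1{q-1}}\Big\}\Big). \] If $r=1$ then $\mathrm{subopt}_k\le\mathrm{subopt}_0\big(1-\frac{q-1}{q}\min\{1,M^{-1/(q-1)}\}\big)^k$. If $r\in[0,1)$ then $\mathrm{subopt}_k\le\mathrm{subopt}_0(1-\frac{q-1}{q})^k$ for $k=0,\dots,k_0$, where $k_0$ is the smallest $k$ with $\mathrm{subopt}_k^{1-r}\le M$, and for $k\ge k_0$ \[ \mathrm{subopt}_k\le\Big(\mathrm{subopt}_{k_0}^{\frac{r-1}{q-1}}+\frac{1-r}{q}\cdot\frac{1}{M^{\frac1{q-1}}}(k-k_0)\Big)^{\frac{q-1}{r-1}}. \]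
   Context: Let $f,\Psi:\mathbb{R}^n\to\mathbb{R}\cup\{\infty\}$ be closed proper convex functions such that (A1) $f$ is differentiable on $\mathrm{dom}(\Psi)$, and (A2) for every $x\in\mathrm{dom}(f)$ the set $\arg\min_s\{\langle\nabla f(x),s\rangle+\Psi(s)\}$ is nonempty. $f^*,\Psi^*$ denote convex conjugates; $\arg\min_y\{\langle g,y\rangle+\Psi(y)\}=\partial\Psi^*(-g)$. $D_f(y,x)=f(y)-f(x)-\langle\nabla f(x),y-x\rangle$. $\mathrm{gap}(x,u)=f(x)+\Psi(x)+f^*(u)+\Psi^*(-u)$. $\mathcal{D}(x,s,\theta)=D_f(x+\theta(s-x),x)+\Psi(x+\theta(s-x))-(1-\theta)\Psi(x)-\theta\Psi(s)$. Suboptimality gap: $\mathrm{subopt}(x)=f(x)+\Psi(x)-\min_y\{f(y)+\Psi(y)\}$ for $x\in\mathrm{dom}(\Psi)$ (the minimum assumed attained/finite). Conditional gradient algorithm: given $x_0\in\mathrm{dom}(\Psi)$, for $k=0,1,2,\dots$ let $g_k=\nabla f(x_k)$, pick $s_k\in\arg\min_y\{\langle g_k,y\rangle+\Psi(y)\}$ and $\theta_k\in[0,1]$, and set $x_{k+1}=(1-\theta_k)x_k+\theta_k s_k$. $\mathrm{subopt}_k=\mathrm{subopt}(x_k)$. $(q,r)$ weak growth property ($q>1$, $r\in[0,1]$): there is a finite $M>0$ such that for all $x\in\mathrm{dom}(\Psi)$, $g=\nabla f(x)$, $s\in\partial\Psi^*(-g)$: $\mathcal D(x,s,\theta)\,\mathrm{subopt}(x)^{1-r}\le\frac{M\theta^q}{q}\mathrm{gap}(x,g)$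 for all $\theta\in[0,1]$. *)

theory Defs
  imports "HOL-Analysis.Analysis"
begin

definition edom :: "('a::real_vector \<Rightarrow> ereal) \<Rightarrow> 'a set" where
  "edom f = {x. f x < \<infinity>}"

definition proper_fun :: "('a::real_vector \<Rightarrow> ereal) \<Rightarrow> bool" where
  "proper_fun f \<longleftrightarrow> (\<forall>x. f x \<noteq> -\<infinity>) \<and> (\<exists>x. f x < \<infinity>)"

definition convex_fun :: "('a::real_vector \<Rightarrow> ereal) \<Rightarrow> bool" where
  "convex_fun f \<longleftrightarrow> (\<forall>x y t. 0 \<le> t \<and> t \<le> 1 \<longrightarrow>
      f ((1 - t) *\<^sub>R x + t *\<^sub>R y) \<le> ereal (1 - t) * f x + ereal t * f y)"

definition closed_fun :: "('a::topological_space \<Rightarrow> ereal) \<Rightarrow> bool" where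
  "closed_fun f \<longleftrightarrow> closed {(x, \<mu>::real). f x \<le> ereal \<mu>}"

definition closed_proper_convex :: "('a::real_normed_vector \<Rightarrow> ereal) \<Rightarrow> bool" where
  "closed_proper_convex f \<longleftrightarrow> closed_fun f \<and> proper_fun f \<and> convex_fun f"

definition conj_fun :: "('a::real_inner \<Rightarrow> ereal) \<Rightarrow> 'a \<Rightarrow> ereal" where
  "conj_fun f u = (SUP x. ereal (u \<bullet> x) - f x)"

text \<open>arg min_y { <g,y> + Psi(y) } (= subdifferential of Psi^* at -g).\<close>
definition lin_argmin :: "('a::real_inner \<Rightarrow> ereal) \<Rightarrow> 'a \<Rightarrow> 'a set" where
  "lin_argmin \<Psi> g = {s. \<forall>y. ereal (g \<bullet> s) + \<Psi> s \<le> ereal (g \<bullet> y) + \<Psi> y}"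

definition bregman :: "('a::real_inner \<Rightarrow> ereal) \<Rightarrow> ('a \<Rightarrow> 'a) \<Rightarrow> 'a \<Rightarrow> 'a \<Rightarrow> ereal" where
  "bregman f grad y x = f y - f x - ereal (grad x \<bullet> (y - x))"

definition gap :: "('a::real_inner \<Rightarrow> ereal) \<Rightarrow> ('a \<Rightarrow> ereal) \<Rightarrow> 'a \<Rightarrow> 'a \<Rightarrow> ereal" where
  "gap f \<Psi> x u = f x + \<Psi> x + conj_fun f u + conj_fun \<Psi> (- u)"

definition Dcal :: "('a::real_inner \<Rightarrow> ereal) \<Rightarrow> ('a \<Rightarrow> 'a) \<Rightarrow> ('a \<Rightarrow> ereal)
    \<Rightarrow> 'a \<Rightarrow> 'a \<Rightarrow> real \<Rightarrow> ereal" where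
  "Dcal f grad \<Psi> x s \<theta> =
     bregman f grad (x + \<theta> *\<^sub>R (s - x)) x + \<Psi> (x + \<theta> *\<^sub>R (s - x))
     - ereal (1 - \<theta>) * \<Psi> x - ereal \<theta> * \<Psi> s"

text \<open>Suboptimality gap (meaningful when the minimum is attained and finite).\<close>
definition subopt :: "('a \<Rightarrow> ereal) \<Rightarrow> ('a \<Rightarrow> ereal) \<Rightarrow> 'a \<Rightarrow> real" where
  "subopt f \<Psi> x = real_of_ereal (f x + \<Psi> x) - real_of_ereal (INF y. f y + \<Psi> y)"

text \<open>Power with the convention a^0 = 1 (also for a = 0), unlike powr.\<close>
definition pow0 :: "real \<Rightarrow> real \<Rightarrow> real" where
  "pow0 a b = (if b = 0 then 1 else a powr b)"

definition weak_growth :: "('a::real_inner \<Rightarrow> ereal) \<Rightarrow> ('a \<Rightarrow> 'a) \<Rightarrow> ('a \<Rightarrow> ereal)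
    \<Rightarrow> real \<Rightarrow> real \<Rightarrow> real \<Rightarrow> bool" where
  "weak_growth f grad \<Psi> q r M \<longleftrightarrow>
     (\<forall>x \<in> edom \<Psi>. \<forall>s \<in> lin_argmin \<Psi> (grad x). \<forall>\<theta>. 0 \<le> \<theta> \<and> \<theta> \<le> 1 \<longrightarrow>
        Dcal f grad \<Psi> x s \<theta> * ereal (pow0 (subopt f \<Psi> x) (1 - r))
          \<le> ereal (M * \<theta> powr q / q) * gap f \<Psi> x (grad x))"

end

theory Submission
  imports Defs
begin

text \<open>
  For convex differentiable f the duality gap at the gradient, gap(x, \<nabla>f(x)), equals the
  Frank--Wolfe gap G = \<langle>\<nabla>f(x), x - s\<rangle> + \<Psi>(x) - \<Psi>(s), which dominates subopt(x), and
  subopt(x + \<theta>(s - x)) = subopt(x) - \<theta> G + D(x, s, \<theta>). The exact line search therefore gives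
  subopt(x_(k+1)) \<le> subopt(x_k) - \<theta> G + D(x_k, s_k, \<theta>) for every \<theta> \<in> [0,1]; bounding D by weak
  growth and taking \<theta> = min {1, (subopt(x_k)^(1-r) / M)^(1/(q-1))} yields the one-step contraction.
  The rates follow from this scalar recurrence alone: while subopt^(1-r) > M it contracts by the
  factor 1/q; afterwards subopt^(-p), with p = (1 - r)/(q - 1), grows by a fixed amount per step,
  by the Bernoulli-type inequality 1 + p u \<le> (1 - u)^(-p).
\<close>

lemma finite_ereal_eq_real_of_ereal: "(a::ereal) \<noteq> -\<infinity> \<Longrightarrow> a < \<infinity> \<Longrightarrow> a = ereal (real_of_ereal a)"
  by (cases a) auto

lemma convex_edom:
  assumes cvx: "convex_fun f" and nm: "\<And>z. f z \<noteq> -\<infinity>"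
  shows "convex (edom f)"
  unfolding convex_alt
proof (intro ballI allI impI)
  fix a b and t :: real
  assume ab: "a \<in> edom f" "b \<in> edom f" and t: "0 \<le> t \<and> t \<le> 1"
  obtain u v where u: "f a = ereal u" and v: "f b = ereal v"
    using ab nm[of a] nm[of b] unfolding edom_def by (cases "f a"; cases "f b") auto
  have "f ((1 - t) *\<^sub>R a + t *\<^sub>R b) \<le> ereal (1 - t) * f a + ereal t * f b"
    using cvx t unfolding convex_fun_def by auto
  also have "\<dots> < \<infinity>" by (simp add: u v)
  finally show "(1 - t) *\<^sub>R a + t *\<^sub>R b \<in> edom f" unfolding edom_def by simp
qed

lemma convex_fun_gradient_inequality:
  fixes f :: "'a::real_inner \<Rightarrow> ereal"
  assumes cvx: "convex_fun f" and nm: "\<And>z. f z \<noteq> -\<infinity>" and fx: "f x < \<infinity>" and fy: "f y < \<infinity>"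
    and der: "((\<lambda>z. real_of_ereal (f z)) has_derivative (\<lambda>h. g \<bullet> h)) (at x)"
  shows "real_of_ereal (f x) + g \<bullet> (y - x) \<le> real_of_ereal (f y)"
proof -
  define fr where "fr z = real_of_ereal (f z)" for z
  define \<phi> where "\<phi> t = fr (x + t *\<^sub>R (y - x))" for t
  have efx: "f x = ereal (fr x)" and efy: "f y = ereal (fr y)"
    unfolding fr_def by (rule finite_ereal_eq_real_of_ereal[OF nm fx], rule finite_ereal_eq_real_of_ereal[OF nm fy])
  have quotient_bound: "(\<phi> t - \<phi> 0) / t \<le> fr y - fr x" if t: "0 < t" "t \<le> 1" for t
  proof -
    have "f ((1 - t) *\<^sub>R x + t *\<^sub>R y) \<le> ereal (1 - t) * f x + ereal t * f y"
      using cvx t unfolding convex_fun_def by auto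
    also have "\<dots> = ereal ((1 - t) * fr x + t * fr y)" by (simp add: efx efy)
    finally have "f (x + t *\<^sub>R (y - x)) \<le> ereal ((1 - t) * fr x + t * fr y)"
      by (simp add: algebra_simps)
    hence "\<phi> t \<le> (1 - t) * fr x + t * fr y"
      using nm[of "x + t *\<^sub>R (y - x)"] unfolding \<phi>_def fr_def
      by (cases "f (x + t *\<^sub>R (y - x))") auto
    hence "\<phi> t - \<phi> 0 \<le> t * (fr y - fr x)" by (simp add: \<phi>_def algebra_simps)
    thus ?thesis using t by (simp add: divide_le_eq mult.commute)
  qed
  have "((fr \<circ> (\<lambda>t. x + t *\<^sub>R (y - x))) has_derivative ((\<lambda>h. g \<bullet> h) \<circ> (\<lambda>t. t *\<^sub>R (y - x)))) (at 0)"
  proof (rule diff_chain_at)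
    show "((\<lambda>t. x + t *\<^sub>R (y - x)) has_derivative (\<lambda>t. t *\<^sub>R (y - x))) (at 0)"
      by (auto intro!: derivative_eq_intros)
    show "(fr has_derivative (\<lambda>h. g \<bullet> h)) (at (x + 0 *\<^sub>R (y - x)))"
      using der unfolding fr_def[abs_def] by simp
  qed
  moreover have "(\<lambda>h. g \<bullet> h) \<circ> (\<lambda>t. t *\<^sub>R (y - x)) = (*) (g \<bullet> (y - x))"
    by (auto simp: fun_eq_iff)
  ultimately have "(\<phi> has_real_derivative (g \<bullet> (y - x))) (at 0)"
    unfolding has_field_derivative_def \<phi>_def by (simp add: o_def)
  hence "(\<phi> has_real_derivative (g \<bullet> (y - x))) (at 0 within {0<..})"
    by (rule has_field_derivative_at_within)
  hence lim: "((\<lambda>t. (\<phi> t - \<phi> 0) / (t - 0)) \<longlongrightarrow> g \<bullet> (y - x)) (at_right 0)"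
    unfolding has_field_derivative_iff .
  have "eventually (\<lambda>t. t \<in> {0<..<1}) (at_right (0::real))"
    by (rule eventually_at_right_real) simp
  hence "eventually (\<lambda>t. (\<phi> t - \<phi> 0) / (t - 0) \<le> fr y - fr x) (at_right (0::real))"
    by eventually_elim (auto intro: quotient_bound)
  hence "g \<bullet> (y - x) \<le> fr y - fr x"
    by (rule tendsto_upperbound[OF lim]) (simp add: trivial_limit_at_right_real)
  thus ?thesis by (simp add: fr_def)
qed

lemma conj_fun_at_gradient:
  fixes f :: "'a::real_inner \<Rightarrow> ereal"
  assumes cvx: "convex_fun f" and nm: "\<And>z. f z \<noteq> -\<infinity>" and fx: "f x < \<infinity>"
    and der: "((\<lambda>z. real_of_ereal (f z)) has_derivative (\<lambda>h. g \<bullet> h)) (at x)"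
  shows "conj_fun f g = ereal (g \<bullet> x - real_of_ereal (f x))"
  unfolding conj_fun_def
proof (rule antisym)
  have efx: "f x = ereal (real_of_ereal (f x))" by (rule finite_ereal_eq_real_of_ereal[OF nm fx])
  show "(SUP y. ereal (g \<bullet> y) - f y) \<le> ereal (g \<bullet> x - real_of_ereal (f x))"
  proof (rule SUP_least)
    fix y
    show "ereal (g \<bullet> y) - f y \<le> ereal (g \<bullet> x - real_of_ereal (f x))"
    proof (cases "f y = \<infinity>")
      case False
      hence fy: "f y < \<infinity>" by (simp add: less_top)
      have efy: "f y = ereal (real_of_ereal (f y))" by (rule finite_ereal_eq_real_of_ereal[OF nm fy])
      have "real_of_ereal (f x) + g \<bullet> (y - x) \<le> real_of_ereal (f y)"
        by (rule convex_fun_gradient_inequality[OF cvx nm fx fy der])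
      hence "g \<bullet> y - real_of_ereal (f y) \<le> g \<bullet> x - real_of_ereal (f x)"
        by (simp add: inner_diff_right)
      thus ?thesis by (subst efy) simp
    qed simp
  qed
  have "ereal (g \<bullet> x) - f x = ereal (g \<bullet> x - real_of_ereal (f x))" by (subst efx) simp
  thus "ereal (g \<bullet> x - real_of_ereal (f x)) \<le> (SUP y. ereal (g \<bullet> y) - f y)"
    by (intro SUP_upper2[of x]) auto
qed

lemma lin_argmin_finite:
  assumes "proper_fun \<Psi>" and s: "s \<in> lin_argmin \<Psi> g"
  shows "\<Psi> s < \<infinity>"
proof -
  obtain y where y: "\<Psi> y < \<infinity>" using assms(1) unfolding proper_fun_def by auto
  have "ereal (g \<bullet> s) + \<Psi> s \<le> ereal (g \<bullet> y) + \<Psi> y" using s unfolding lin_argmin_def by auto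
  also have "\<dots> < \<infinity>" using y by simp
  finally show ?thesis by (cases "\<Psi> s") auto
qed

lemma conj_fun_neg_at_lin_argmin:
  assumes pr: "proper_fun \<Psi>" and s: "s \<in> lin_argmin \<Psi> g"
  shows "conj_fun \<Psi> (-g) = ereal (- (g \<bullet> s) - real_of_ereal (\<Psi> s))"
  unfolding conj_fun_def
proof (rule antisym)
  have nm: "\<And>z. \<Psi> z \<noteq> -\<infinity>" using pr unfolding proper_fun_def by auto
  have eps: "\<Psi> s = ereal (real_of_ereal (\<Psi> s))"
    by (rule finite_ereal_eq_real_of_ereal[OF nm lin_argmin_finite[OF pr s]])
  show "(SUP y. ereal (- g \<bullet> y) - \<Psi> y) \<le> ereal (- (g \<bullet> s) - real_of_ereal (\<Psi> s))"
  proof (rule SUP_least)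
    fix y
    show "ereal (- g \<bullet> y) - \<Psi> y \<le> ereal (- (g \<bullet> s) - real_of_ereal (\<Psi> s))"
    proof (cases "\<Psi> y = \<infinity>")
      case False
      hence epy: "\<Psi> y = ereal (real_of_ereal (\<Psi> y))"
        using finite_ereal_eq_real_of_ereal[OF nm] by (simp add: less_top)
      have "ereal (g \<bullet> s) + \<Psi> s \<le> ereal (g \<bullet> y) + \<Psi> y"
        using s unfolding lin_argmin_def by auto
      hence "g \<bullet> s + real_of_ereal (\<Psi> s) \<le> g \<bullet> y + real_of_ereal (\<Psi> y)"
        by (subst (asm) eps, subst (asm) epy) simp
      thus ?thesis by (subst epy) simp
    qed simp
  qed
  show "ereal (- (g \<bullet> s) - real_of_ereal (\<Psi> s)) \<le> (SUP y. ereal (- g \<bullet> y) - \<Psi> y)"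
  proof -
    have "ereal (- g \<bullet> s) - \<Psi> s = ereal (- (g \<bullet> s) - real_of_ereal (\<Psi> s))" by (subst eps) simp
    thus ?thesis by (intro SUP_upper2[of s]) auto
  qed
qed

lemma line_search_contraction:
  fixes S Sn G q e M :: real and D :: "real \<Rightarrow> real"
  assumes S: "0 \<le> S" "S \<le> G" and q: "q > 1" and M: "M > 0" and D0: "D 0 = 0"
    and descent: "\<And>t. 0 \<le> t \<Longrightarrow> t \<le> 1 \<Longrightarrow> Sn \<le> S - t * G + D t"
    and growth: "\<And>t. 0 \<le> t \<Longrightarrow> t \<le> 1 \<Longrightarrow> D t * pow0 S e \<le> M * t powr q / q * G"
  shows "Sn \<le> S * (1 - (q - 1) / q * min 1 ((pow0 S e / M) powr (1 / (q - 1))))"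
proof (cases "S = 0")
  case True
  then show ?thesis using descent[of 0] D0 by simp
next
  case False
  define P where "P = pow0 S e"
  have P: "P > 0" using False S(1) by (simp add: P_def pow0_def)
  define t where "t = min 1 ((P / M) powr (1 / (q - 1)))"
  have t: "0 < t" "t \<le> 1" using P M by (auto simp: t_def)
  have t_pow: "t powr (q - 1) \<le> P / M"
  proof (cases "(P / M) powr (1 / (q - 1)) \<le> 1")
    case True
    hence "t powr (q - 1) = (P / M) powr (1 / (q - 1) * (q - 1))" by (simp add: t_def powr_powr)
    thus ?thesis using q P M by simp
  next
    case False
    have "1 \<le> P / M"
    proof (rule ccontr)
      assume "\<not> 1 \<le> P / M"
      hence "(P / M) powr (1 / (q - 1)) \<le> 1 powr (1 / (q - 1))"
        using P M q by (intro powr_mono2) auto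
      thus False using False by simp
    qed
    thus ?thesis using False by (simp add: t_def)
  qed
  have G: "0 \<le> G" using S by simp
  have tq: "t powr q = t * t powr (q - 1)" using powr_mult_base[of t "q - 1"] t by simp
  have "D t * P \<le> M * t powr q / q * G" using growth t by (simp add: P_def)
  also have "\<dots> = (M * t powr (q - 1)) * (t * G / q)" by (simp add: tq)
  also have "\<dots> \<le> P * (t * G / q)"
    using t_pow t G q M by (intro mult_right_mono) (auto simp: field_simps)
  finally have "D t * P \<le> (t * G / q) * P" by (simp add: mult.commute)
  hence "D t \<le> t * G / q" using P by (rule mult_right_le_imp_le)
  hence "Sn \<le> S - t * G + t * G / q" using descent[OF less_imp_le[OF t(1)] t(2)] by simp
  also have "\<dots> = S - t * ((q - 1) / q) * G" using q by (simp add: field_simps)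
  also have "\<dots> \<le> S - t * ((q - 1) / q) * S" using S t q by (intro diff_left_mono mult_left_mono) auto
  finally show ?thesis by (simp add: t_def P_def algebra_simps)
qed

lemma one_plus_mult_le_powr_neg:
  fixes u p :: real
  assumes "0 \<le> u" "u < 1" "0 \<le> p"
  shows "1 + p * u \<le> (1 - u) powr (- p)"
proof -
  have "p * u \<le> p * (- ln (1 - u))"
    using ln_le_minus_one[of "1 - u"] assms by (intro mult_left_mono) auto
  also have "1 + p * (- ln (1 - u)) \<le> exp (- p * ln (1 - u))"
    using exp_ge_add_one_self[of "- p * ln (1 - u)"] by simp
  finally show ?thesis using assms by (simp add: powr_def)
qed

lemma powr_neg_increment:
  fixes s s' c p :: real
  assumes s': "0 < s'" "s' \<le> s * (1 - c * s powr p)"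
    and rate: "0 \<le> c * s powr p" "c * s powr p < 1" and p: "0 < p"
  shows "s powr (- p) + p * c \<le> s' powr (- p)"
proof -
  define u where "u = c * s powr p"
  have s: "0 < s"
  proof (rule ccontr)
    assume "\<not> 0 < s"
    hence "s * (1 - c * s powr p) \<le> 0" using rate by (intro mult_nonpos_nonneg) auto
    thus False using s' by simp
  qed
  have "s powr (- p) + p * c = s powr (- p) * (1 + p * u)"
    using s by (simp add: u_def algebra_simps flip: powr_add)
  also have "\<dots> \<le> s powr (- p) * (1 - u) powr (- p)"
    using one_plus_mult_le_powr_neg[of u p] rate p by (intro mult_left_mono) (auto simp: u_def)
  also have "\<dots> = (s * (1 - u)) powr (- p)" using s rate by (simp add: u_def powr_mult)
  also have "\<dots> \<le> s' powr (- p)" using s' p by (intro powr_mono2') (auto simp: u_def)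
  finally show ?thesis .
qed

lemma geometric_bound:
  fixes S :: "nat \<Rightarrow> real"
  assumes "0 \<le> \<rho>" and "\<And>k. k < n \<Longrightarrow> S (Suc k) \<le> S k * \<rho>"
  shows "S n \<le> S 0 * \<rho> ^ n"
  using assms(2)
proof (induction n)
  case (Suc n)
  have "S (Suc n) \<le> S n * \<rho>" by (rule Suc.prems) simp
  also have "\<dots> \<le> S 0 * \<rho> ^ n * \<rho>" using Suc assms(1) by (intro mult_right_mono) auto
  finally show ?case by (simp add: algebra_simps)
qed simp

locale cg_recurrence =
  fixes S :: "nat \<Rightarrow> real" and q r M :: real
  assumes nonneg: "\<And>k. 0 \<le> S k" and q_gt_1: "q > 1" and M_pos: "M > 0"
    and contraction: "\<And>k. S (Suc k)
          \<le> S k * (1 - (q - 1) / q * min 1 ((pow0 (S k) (1 - r) / M) powr (1 / (q - 1))))"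
begin

lemma rate_bounds:
  shows "0 \<le> (q - 1) / q * min 1 (X powr e)" and "(q - 1) / q * min 1 (X powr e) < 1"
proof -
  have a: "0 \<le> (q - 1) / q" "(q - 1) / q < 1" using q_gt_1 by auto
  have m: "0 \<le> min 1 (X powr e)" "min 1 (X powr e) \<le> 1" by auto
  show "0 \<le> (q - 1) / q * min 1 (X powr e)" using mult_nonneg_nonneg[OF a(1) m(1)] .
  show "(q - 1) / q * min 1 (X powr e) < 1" using mult_left_mono[OF m(2) a(1)] a(2) by linarith
qed

lemma decreasing: "S (Suc k) \<le> S k"
proof -
  have "S k * (1 - (q - 1) / q * min 1 ((pow0 (S k) (1 - r) / M) powr (1 / (q - 1)))) \<le> S k"
    using rate_bounds(1)[of "pow0 (S k) (1 - r) / M" "1 / (q - 1)"] nonneg[of k]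
    by (intro mult_left_le) auto
  thus ?thesis using contraction[of k] by linarith
qed

lemma antimono: "k \<le> j \<Longrightarrow> S j \<le> S k"
  by (rule lift_Suc_antimono_le[of S, OF decreasing])

lemma geometric_rate_of_r_eq_1:
  assumes "r = 1"
  shows "S k \<le> S 0 * (1 - (q - 1) / q * min 1 (M powr (- 1 / (q - 1)))) ^ k"
proof (rule geometric_bound)
  have "(1 / M) powr (1 / (q - 1)) = M powr (- 1 / (q - 1))"
    using M_pos by (simp add: powr_divide powr_minus_divide)
  thus "S (Suc j) \<le> S j * (1 - (q - 1) / q * min 1 (M powr (- 1 / (q - 1))))" for j
    using contraction[of j] assms by (simp add: pow0_def)
  show "0 \<le> 1 - (q - 1) / q * min 1 (M powr (- 1 / (q - 1)))"
    using rate_bounds(2)[of M "- 1 / (q - 1)"] by simp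
qed

context
  assumes r_lt_1: "r < 1"
begin

lemma pow0_eq_powr: "pow0 x (1 - r) = x powr (1 - r)"
  using r_lt_1 by (simp add: pow0_def)

lemma geometric_rate_while_large:
  assumes "\<And>j. j < n \<Longrightarrow> M < S j powr (1 - r)"
  shows "S n \<le> S 0 * (1 - (q - 1) / q) ^ n"
proof (rule geometric_bound)
  fix j assume "j < n"
  hence "1 \<le> (S j powr (1 - r) / M) powr (1 / (q - 1))"
    using assms[OF \<open>j < n\<close>] M_pos q_gt_1 by (intro ge_one_powr_ge_zero) auto
  thus "S (Suc j) \<le> S j * (1 - (q - 1) / q)" using contraction[of j] by (simp add: pow0_eq_powr)
qed (use q_gt_1 in simp)

lemma eventually_small: "\<exists>k. S k powr (1 - r) \<le> M"
proof (rule ccontr)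
  assume "\<nexists>k. S k powr (1 - r) \<le> M"
  hence large: "M < S k powr (1 - r)" for k by (simp add: not_le)
  define \<delta> where "\<delta> = M powr (1 / (1 - r))"
  have \<delta>: "0 < \<delta>" "\<delta> powr (1 - r) = M" using M_pos r_lt_1 by (simp_all add: \<delta>_def powr_powr)
  obtain n where n: "(1 - (q - 1) / q) ^ n < \<delta> / (S 0 + 1)"
    using real_arch_pow_inv[of "\<delta> / (S 0 + 1)" "1 - (q - 1) / q"] \<delta> nonneg[of 0] q_gt_1 by auto
  have "S n \<le> S 0 * (1 - (q - 1) / q) ^ n" by (rule geometric_rate_while_large[OF large])
  also have "\<dots> \<le> (S 0 + 1) * (1 - (q - 1) / q) ^ n" using q_gt_1 by (intro mult_right_mono) auto
  also have "\<dots> < \<delta>" using n nonneg[of 0] by (simp add: field_simps)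
  finally have "S n powr (1 - r) < \<delta> powr (1 - r)"
    using r_lt_1 nonneg[of n] by (intro powr_less_mono2) auto
  thus False using large[of n] \<delta> by simp
qed

lemma rate_while_small:
  assumes "S n powr (1 - r) \<le> M"
  shows "(q - 1) / q * min 1 ((pow0 (S n) (1 - r) / M) powr (1 / (q - 1)))
       = (q - 1) / q / M powr (1 / (q - 1)) * S n powr ((1 - r) / (q - 1))"
proof -
  have "(S n powr (1 - r) / M) powr (1 / (q - 1)) \<le> 1 powr (1 / (q - 1))"
    using assms M_pos q_gt_1 by (intro powr_mono2) auto
  moreover have "(S n powr (1 - r) / M) powr (1 / (q - 1)) = S n powr ((1 - r) / (q - 1)) / M powr (1 / (q - 1))"
    by (simp add: powr_divide powr_powr)
  ultimately show ?thesis by (simp add: pow0_eq_powr)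
qed

lemma inverse_power_growth:
  defines "p \<equiv> (1 - r) / (q - 1)" and "c \<equiv> (q - 1) / q / M powr (1 / (q - 1))"
  assumes small: "S k0 powr (1 - r) \<le> M" and "k0 \<le> n" and "0 < S n"
  shows "S k0 powr (- p) + p * c * real (n - k0) \<le> S n powr (- p)"
  using \<open>k0 \<le> n\<close> \<open>0 < S n\<close>
proof (induction n rule: dec_induct)
  case (step n)
  have pos: "0 < S n" using step.prems decreasing[of n] by simp
  have "S n powr (1 - r) \<le> S k0 powr (1 - r)"
    using antimono[OF step.hyps(1)] nonneg[of n] r_lt_1 by (intro powr_mono2) auto
  hence "S n powr (1 - r) \<le> M" using small by linarith
  note rate = rate_while_small[OF this, folded p_def c_def]
  have "S n powr (- p) + p * c \<le> S (Suc n) powr (- p)"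
  proof (rule powr_neg_increment)
    show "S (Suc n) \<le> S n * (1 - c * S n powr p)" using contraction[of n] rate by simp
    show "0 \<le> c * S n powr p" "c * S n powr p < 1" unfolding rate[symmetric] by (rule rate_bounds)+
    show "0 < p" using q_gt_1 r_lt_1 by (simp add: p_def)
  qed (use step.prems in simp)
  moreover have "real (Suc n - k0) = real (n - k0) + 1" using step.hyps(1) by simp
  ultimately show ?case using step.IH[OF pos] by (simp add: algebra_simps)
qed simp

lemma sublinear_rate:
  assumes small: "S k0 powr (1 - r) \<le> M" and "k0 \<le> k"
  shows "S k \<le> (if S k0 = 0 then 0
                 else (S k0 powr ((r - 1) / (q - 1))
                       + (1 - r) / q * (1 / M powr (1 / (q - 1))) * real (k - k0))
                      powr ((q - 1) / (r - 1)))"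
proof (cases "S k0 = 0")
  case True
  then show ?thesis using antimono[OF \<open>k0 \<le> k\<close>] nonneg[of k] by simp
next
  case False
  define p where "p = (1 - r) / (q - 1)"
  define c where "c = (q - 1) / q / M powr (1 / (q - 1))"
  define B where "B = S k0 powr (- p) + p * c * real (k - k0)"
  have p: "0 < p" using q_gt_1 r_lt_1 by (simp add: p_def)
  have B: "0 < B" using False nonneg[of k0] p q_gt_1 M_pos
    by (auto simp: B_def c_def intro!: add_pos_nonneg)
  have "S k \<le> B powr (- (1 / p))"
  proof (cases "S k = 0")
    case False
    hence pos: "0 < S k" using nonneg[of k] by simp
    have "B \<le> S k powr (- p)"
      unfolding B_def p_def c_def by (rule inverse_power_growth[OF small \<open>k0 \<le> k\<close> pos])
    hence "(S k powr (- p)) powr (- (1 / p)) \<le> B powr (- (1 / p))"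
      using B p by (intro powr_mono2') auto
    thus ?thesis using pos p by (simp add: powr_powr)
  qed simp
  moreover have "(r - 1) / (q - 1) = - p" "(q - 1) / (r - 1) = - (1 / p)"
    using q_gt_1 r_lt_1 by (simp_all add: p_def field_simps)
  moreover have "(1 - r) / q * (1 / M powr (1 / (q - 1))) = p * c"
    using q_gt_1 by (simp add: p_def c_def)
  ultimately show ?thesis using False by (simp add: B_def)
qed

end

end

locale composite_minimization =
  fixes f \<Psi> :: "'a::real_inner \<Rightarrow> ereal" and grad :: "'a \<Rightarrow> 'a"
  assumes f_proper: "proper_fun f" and f_convex: "convex_fun f"
    and Psi_proper: "proper_fun \<Psi>" and Psi_convex: "convex_fun \<Psi>"
    and edom_Psi_subset: "edom \<Psi> \<subseteq> edom f"
    and gradient: "\<And>y. y \<in> edom \<Psi> \<Longrightarrow> ((\<lambda>z. real_of_ereal (f z)) has_derivative (\<lambda>h. grad y \<bullet> h)) (at y)"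
    and minimum_attained: "\<exists>xs \<in> edom \<Psi>. \<forall>y. f xs + \<Psi> xs \<le> f y + \<Psi> y"
begin

definition f_real :: "'a \<Rightarrow> real" where "f_real y = real_of_ereal (f y)"

definition Psi_real :: "'a \<Rightarrow> real" where "Psi_real y = real_of_ereal (\<Psi> y)"

definition fw_gap :: "'a \<Rightarrow> 'a \<Rightarrow> real" where
  "fw_gap x s = Psi_real x + grad x \<bullet> (x - s) - Psi_real s"

lemma f_not_MInf: "f z \<noteq> -\<infinity>"
  using f_proper unfolding proper_fun_def by auto

lemma Psi_not_MInf: "\<Psi> z \<noteq> -\<infinity>"
  using Psi_proper unfolding proper_fun_def by auto

lemma f_finite: "y \<in> edom \<Psi> \<Longrightarrow> f y = ereal (f_real y)"
  using edom_Psi_subset finite_ereal_eq_real_of_ereal[OF f_not_MInf]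
  unfolding edom_def f_real_def by auto

lemma Psi_finite: "y \<in> edom \<Psi> \<Longrightarrow> \<Psi> y = ereal (Psi_real y)"
  using finite_ereal_eq_real_of_ereal[OF Psi_not_MInf] unfolding edom_def Psi_real_def by auto

lemma convex_edom_Psi: "convex (edom \<Psi>)"
  by (rule convex_edom[OF Psi_convex Psi_not_MInf])

lemma lin_argmin_in_edom: "s \<in> lin_argmin \<Psi> g \<Longrightarrow> s \<in> edom \<Psi>"
  using lin_argmin_finite[OF Psi_proper] unfolding edom_def by auto

lemma gap_eq_fw_gap:
  assumes x: "x \<in> edom \<Psi>" and s: "s \<in> lin_argmin \<Psi> (grad x)"
  shows "gap f \<Psi> x (grad x) = ereal (fw_gap x s)"
proof -
  have fx: "f x < \<infinity>" using f_finite[OF x] by simp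
  show ?thesis
    unfolding gap_def conj_fun_at_gradient[OF f_convex f_not_MInf fx gradient[OF x]]
      conj_fun_neg_at_lin_argmin[OF Psi_proper s] f_real_def[symmetric] Psi_real_def[symmetric]
    using f_finite[OF x] Psi_finite[OF x] Psi_finite[OF lin_argmin_in_edom[OF s]]
    by (simp add: fw_gap_def inner_diff_right)
qed

lemma subopt_eq_at_minimizer:
  assumes xs: "xs \<in> edom \<Psi>" "\<forall>y. f xs + \<Psi> xs \<le> f y + \<Psi> y" and y: "y \<in> edom \<Psi>"
  shows "subopt f \<Psi> y = f_real y + Psi_real y - (f_real xs + Psi_real xs)"
proof -
  have "(INF y. f y + \<Psi> y) = f xs + \<Psi> xs"
    using xs(2) by (intro antisym INF_lower2[of xs] INF_greatest) auto
  thus ?thesis unfolding subopt_def using f_finite Psi_finite xs(1) y by simp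
qed

lemma subopt_nonneg:
  assumes y: "y \<in> edom \<Psi>"
  shows "0 \<le> subopt f \<Psi> y"
proof -
  obtain xs where xs: "xs \<in> edom \<Psi>" "\<forall>y. f xs + \<Psi> xs \<le> f y + \<Psi> y"
    using minimum_attained by blast
  have "f xs + \<Psi> xs \<le> f y + \<Psi> y" using xs(2) by blast
  hence "f_real xs + Psi_real xs \<le> f_real y + Psi_real y"
    using f_finite Psi_finite xs(1) y by simp
  thus ?thesis unfolding subopt_eq_at_minimizer[OF xs y] by simp
qed

lemma subopt_le_fw_gap:
  assumes x: "x \<in> edom \<Psi>" and s: "s \<in> lin_argmin \<Psi> (grad x)"
  shows "subopt f \<Psi> x \<le> fw_gap x s"
proof -
  obtain xs where xs: "xs \<in> edom \<Psi>" "\<forall>y. f xs + \<Psi> xs \<le> f y + \<Psi> y"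
    using minimum_attained by blast
  have "f_real x + grad x \<bullet> (xs - x) \<le> f_real xs"
    unfolding f_real_def
    using f_finite[OF x] f_finite[OF xs(1)]
    by (intro convex_fun_gradient_inequality[OF f_convex f_not_MInf _ _ gradient[OF x]]) auto
  moreover have "ereal (grad x \<bullet> s) + \<Psi> s \<le> ereal (grad x \<bullet> xs) + \<Psi> xs"
    using s unfolding lin_argmin_def by auto
  hence "grad x \<bullet> s + Psi_real s \<le> grad x \<bullet> xs + Psi_real xs"
    using Psi_finite[OF lin_argmin_in_edom[OF s]] Psi_finite[OF xs(1)] by simp
  ultimately show ?thesis
    unfolding subopt_eq_at_minimizer[OF xs x] fw_gap_def by (simp add: inner_diff_right)
qed

lemma Dcal_eq_subopt_increment:
  assumes x: "x \<in> edom \<Psi>" and s: "s \<in> edom \<Psi>" and t: "0 \<le> t" "t \<le> 1"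
  shows "Dcal f grad \<Psi> x s t
       = ereal (subopt f \<Psi> (x + t *\<^sub>R (s - x)) - subopt f \<Psi> x + t * fw_gap x s)"
proof -
  have z: "x + t *\<^sub>R (s - x) \<in> edom \<Psi>"
    using convexD_alt[OF convex_edom_Psi x s t] by (simp add: algebra_simps)
  have "subopt f \<Psi> (x + t *\<^sub>R (s - x)) - subopt f \<Psi> x
      = f_real (x + t *\<^sub>R (s - x)) + Psi_real (x + t *\<^sub>R (s - x)) - f_real x - Psi_real x"
    unfolding subopt_def using f_finite Psi_finite x z by simp
  thus ?thesis
    unfolding Dcal_def bregman_def
    using f_finite Psi_finite x s z
    by (simp add: fw_gap_def inner_diff_right algebra_simps)
qed

lemma line_search_step:
  assumes x: "x \<in> edom \<Psi>" and s: "s \<in> lin_argmin \<Psi> (grad x)" and \<theta>: "0 \<le> \<theta>" "\<theta> \<le> 1"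
    and exact: "\<forall>t. 0 \<le> t \<and> t \<le> 1 \<longrightarrow>
        ereal (1 - \<theta>) * gap f \<Psi> x (grad x) + Dcal f grad \<Psi> x s \<theta>
        \<le> ereal (1 - t) * gap f \<Psi> x (grad x) + Dcal f grad \<Psi> x s t"
    and q: "q > 1" and M: "M > 0" and growth: "weak_growth f grad \<Psi> q r M"
  shows "subopt f \<Psi> ((1 - \<theta>) *\<^sub>R x + \<theta> *\<^sub>R s)
       \<le> subopt f \<Psi> x * (1 - (q - 1) / q * min 1 ((pow0 (subopt f \<Psi> x) (1 - r) / M) powr (1 / (q - 1))))"
proof -
  define G where "G = fw_gap x s"
  define D where "D t = subopt f \<Psi> (x + t *\<^sub>R (s - x)) - subopt f \<Psi> x + t * G" for t
  have gap: "gap f \<Psi> x (grad x) = ereal G"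
    unfolding G_def by (rule gap_eq_fw_gap[OF x s])
  have Dcal: "Dcal f grad \<Psi> x s t = ereal (D t)" if "0 \<le> t" "t \<le> 1" for t
    unfolding D_def G_def by (rule Dcal_eq_subopt_increment[OF x lin_argmin_in_edom[OF s] that])
  have next_point: "(1 - \<theta>) *\<^sub>R x + \<theta> *\<^sub>R s = x + \<theta> *\<^sub>R (s - x)"
    by (simp add: algebra_simps)
  show ?thesis
  proof (rule line_search_contraction[where D = D and G = G])
    show "0 \<le> subopt f \<Psi> x" by (rule subopt_nonneg[OF x])
    show "subopt f \<Psi> x \<le> G" unfolding G_def by (rule subopt_le_fw_gap[OF x s])
    show "D 0 = 0" by (simp add: D_def)
    fix t :: real assume t: "0 \<le> t" "t \<le> 1"
    have "(1 - \<theta>) * G + D \<theta> \<le> (1 - t) * G + D t"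
      using exact t \<theta> by (simp add: gap Dcal)
    thus "subopt f \<Psi> ((1 - \<theta>) *\<^sub>R x + \<theta> *\<^sub>R s) \<le> subopt f \<Psi> x - t * G + D t"
      unfolding next_point by (simp add: D_def algebra_simps)
    have "Dcal f grad \<Psi> x s t * ereal (pow0 (subopt f \<Psi> x) (1 - r))
        \<le> ereal (M * t powr q / q) * gap f \<Psi> x (grad x)"
      using growth x s t unfolding weak_growth_def by blast
    thus "D t * pow0 (subopt f \<Psi> x) (1 - r) \<le> M * t powr q / q * G"
      by (simp add: gap Dcal[OF t])
  qed (use q M in auto)
qed

end

theorem theorem3:
  fixes f \<Psi> :: "real^'n \<Rightarrow> ereal"
    and grad :: "real^'n \<Rightarrow> real^'n"
    and x s :: "nat \<Rightarrow> real^'n"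
    and \<theta> :: "nat \<Rightarrow> real"
    and q r M :: real
  assumes f_cpc: "closed_proper_convex f"
    and Psi_cpc: "closed_proper_convex \<Psi>"
    and A1: "\<forall>y \<in> edom \<Psi>. y \<in> interior (edom f) \<and>
               ((\<lambda>z. real_of_ereal (f z)) has_derivative (\<lambda>h. grad y \<bullet> h)) (at y)"
    and A2: "\<forall>y \<in> edom \<Psi>. lin_argmin \<Psi> (grad y) \<noteq> {}"
    and min_attained: "\<exists>xs \<in> edom \<Psi>. \<forall>y. f xs + \<Psi> xs \<le> f y + \<Psi> y"
    and x0: "x 0 \<in> edom \<Psi>"
    and s_def: "\<forall>k. s k \<in> lin_argmin \<Psi> (grad (x k))"
    and x_step: "\<forall>k. x (Suc k) = (1 - \<theta> k) *\<^sub>R x k + \<theta> k *\<^sub>R s k"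
    and linesearch: "\<forall>k. 0 \<le> \<theta> k \<and> \<theta> k \<le> 1 \<and>
        (\<forall>t. 0 \<le> t \<and> t \<le> 1 \<longrightarrow>
           ereal (1 - \<theta> k) * gap f \<Psi> (x k) (grad (x k)) + Dcal f grad \<Psi> (x k) (s k) (\<theta> k)
           \<le> ereal (1 - t) * gap f \<Psi> (x k) (grad (x k)) + Dcal f grad \<Psi> (x k) (s k) t)"
    and q: "q > 1" and r: "0 \<le> r" "r \<le> 1"
    and M: "M > 0"
    and growth: "weak_growth f grad \<Psi> q r M"
  shows "(\<forall>k. subopt f \<Psi> (x (Suc k)) \<le> subopt f \<Psi> (x k) *
              (1 - (q - 1) / q * min 1 ((pow0 (subopt f \<Psi> (x k)) (1 - r) / M) powr (1 / (q - 1)))))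
       \<and> (r = 1 \<longrightarrow> (\<forall>k. subopt f \<Psi> (x k) \<le> subopt f \<Psi> (x 0) *
              (1 - (q - 1) / q * min 1 (M powr (- 1 / (q - 1)))) ^ k))
       \<and> (r < 1 \<longrightarrow>
            (\<exists>k. subopt f \<Psi> (x k) powr (1 - r) \<le> M) \<and>
            (\<forall>k0. subopt f \<Psi> (x k0) powr (1 - r) \<le> M \<and>
                  (\<forall>j < k0. \<not> subopt f \<Psi> (x j) powr (1 - r) \<le> M) \<longrightarrow>
               (\<forall>k \<le> k0. subopt f \<Psi> (x k) \<le> subopt f \<Psi> (x 0) * (1 - (q - 1) / q) ^ k) \<and>
               (\<forall>k \<ge> k0. subopt f \<Psi> (x k) \<le>
                  (if subopt f \<Psi> (x k0) = 0 then 0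
                   else (subopt f \<Psi> (x k0) powr ((r - 1) / (q - 1))
                         + (1 - r) / q * (1 / M powr (1 / (q - 1))) * real (k - k0))
                        powr ((q - 1) / (r - 1))))))"
proof -
  interpret composite_minimization f \<Psi> grad
    using f_cpc Psi_cpc A1 interior_subset min_attained
    unfolding closed_proper_convex_def by unfold_locales blast+
  have x_dom: "x k \<in> edom \<Psi>" for k
  proof (induction k)
    case (Suc k)
    show ?case unfolding x_step[rule_format] using linesearch
      by (intro convexD_alt[OF convex_edom_Psi Suc lin_argmin_in_edom[OF s_def[rule_format]]]) auto
  qed (rule x0)
  have step: "subopt f \<Psi> (x (Suc k)) \<le> subopt f \<Psi> (x k) *
      (1 - (q - 1) / q * min 1 ((pow0 (subopt f \<Psi> (x k)) (1 - r) / M) powr (1 / (q - 1))))" for k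
    unfolding x_step[rule_format] using linesearch
    by (intro line_search_step[OF x_dom s_def[rule_format] _ _ _ q M growth]) auto
  interpret S: cg_recurrence "\<lambda>k. subopt f \<Psi> (x k)" q r M
    using subopt_nonneg[OF x_dom] q M step by unfold_locales
  show ?thesis
    using step S.geometric_rate_of_r_eq_1 S.eventually_small S.sublinear_rate
      S.geometric_rate_while_large by (auto simp: not_le)
qed

end
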